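(* Let $G$ be a (strong) placement game played on a board $B$. Then there exist simplicial complexes $\Delta$ and $\Gamma$ on the vertex set $\{x_1,\dots,x_n,y_1,\dots,y_o\}$ such that $G$ played on $B$ is equivalent to the game played on $\Gamma$ with the Illegal Ruleset, and equivalent to the game played on $\Delta$ with the Legal Ruleset; that is, under the identification of positions of $G$ with sets of occupied vertices described below, the legal positions of $G$ on $B$ are exactly the legal positions of each of these games (one may take $\Delta=\Delta_{G,B}$, the legal complex, and $\Gamma=\Gamma_{G,B}$, the illegal complex).
   Context: A combinatorial game is a two-player game (players Left and Right) of perfect information and no chance, given by a set of positions, a starting position, and rules specifying legal moves; a legal position is one reachable from the starting position by legal moves. The board is a graph. A (strong) placement game is a combinatorial game such that: (i) the starting position is the empty board; (ii) players place pieces on empty spaces of the board according to the rules; (iii) pieces are never moved or removed; (iv) if a position can be reached by a sequence of legal moves, then every sequence of moves leading to this position consists only of legal moves. Positions are not assumed to alternate between players. A basic position is a board with exactly one piece placed. Label the basic positions by indices; a position of $G$ is identified with the set of vertices of $\{x_1,\dots,x_n,y_1,\dots,y_o\}$ containing $x_i$ iff Left has placed in basic position $i$ and $y_j$ iff Right has placed in basic position $j$. The legal complex $\Delta_{G,B}$ is the simplicial complex whose faces are the sets corresponding to legal positions (equivalently, subsets of the set of a legal position); the illegal complex $\Gamma_{G,B}$ is the simplicial complex whose facets are the sets corresponding to minimal illegal positions. Illegal Ruleset on a simplicial complex $\Gamma$: (1) Left may only play (place pieces) on vertices labelled $x_i$ and Right only on vertices labelled $y_i$; (2) for every facet of $\Gamma$,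 the occupied vertices may not include all vertices of that facet. Legal Ruleset on a simplicial complex $\Delta$: (1) Left may only play on vertices labelled $x_i$ and Right only on vertices labelled $y_i$; (2) the set of occupied vertices must be a face of $\Delta$. *)

theory Defs
  imports Main
begin

text \<open>Vertices: X i stands for x_i (Left plays basic position i),
  Y j stands for y_j (Right plays basic position j).\<close>
datatype vtx = X nat | Y nat

definition vertices :: "nat \<Rightarrow> nat \<Rightarrow> vtx set" where
  "vertices n m = X ` {1..n} \<union> Y ` {1..m}"

text \<open>A game in which pieces are placed (never moved or removed), starting from
  the empty board, without alternation of players.  The rules are given by a predicate
  mv S v: in position S (set of occupied vertices) it is legal to place on vertex v.
  Left may only place on X-vertices, Right only on Y-vertices; this is built into
  the labelling.\<close>
inductive_set reach :: "vtx set \<Rightarrow> (vtx set \<Rightarrow> vtx \<Rightarrow> bool) \<Rightarrow> vtx set set"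
  for V mv where
  empty: "{} \<in> reach V mv"
| step: "S \<in> reach V mv \<Longrightarrow> v \<in> V \<Longrightarrow> v \<notin> S \<Longrightarrow> mv S v \<Longrightarrow> insert v S \<in> reach V mv"

definition strong_placement :: "vtx set \<Rightarrow> (vtx set \<Rightarrow> vtx \<Rightarrow> bool) \<Rightarrow> bool" where
  "strong_placement V mv \<longleftrightarrow>
     (\<forall>S \<in> reach V mv. \<forall>vs. distinct vs \<and> set vs = S \<longrightarrow>
        (\<forall>k < length vs. mv (set (take k vs)) (vs ! k)))"

text \<open>Simplicial complex on vertex set V: a down-closed family of finite subsets of V
  (the void complex is allowed).\<close>
definition simplicial_complex :: "'a set \<Rightarrow> 'a set set \<Rightarrow> bool" where
  "simplicial_complex V K \<longleftrightarrow>
     (\<forall>F \<in> K. F \<subseteq> V \<and> finite F) \<and> (\<forall>F \<in> K. \<forall>G. G \<subseteq> F \<longrightarrow> G \<in> K)"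

definition facets :: "'a set set \<Rightarrow> 'a set set" where
  "facets K = {F \<in> K. \<forall>G \<in> K. F \<subseteq> G \<longrightarrow> G = F}"

definition illegal_ruleset :: "vtx set set \<Rightarrow> vtx set \<Rightarrow> vtx \<Rightarrow> bool" where
  "illegal_ruleset \<Gamma> S v \<longleftrightarrow> (\<forall>F \<in> facets \<Gamma>. \<not> F \<subseteq> insert v S)"

definition legal_ruleset :: "vtx set set \<Rightarrow> vtx set \<Rightarrow> vtx \<Rightarrow> bool" where
  "legal_ruleset \<Delta> S v \<longleftrightarrow> insert v S \<in> \<Delta>"

end

theory Submission
  imports Defs
begin

text \<open>Condition (iv) makes the set of legal positions closed under taking subsets: a
  subposition can be played first, as a prefix of a listing of the whole position.
  So the legal positions form a simplicial complex \<Delta>, and the Legal Ruleset on \<Delta>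
  reproduces them because every face is built up one vertex at a time through faces.
  For the Illegal Ruleset take \<Gamma> generated by the minimal non-faces of \<Delta>: these
  form an antichain, hence are exactly the facets of \<Gamma>, and a set of vertices is a
  face of \<Delta> iff it contains no minimal non-face.\<close>

lemma reach_subset_finite: "S \<in> reach V mv \<Longrightarrow> S \<subseteq> V \<and> finite S"
  by (induction rule: reach.induct) auto

lemma reach_mono_rules:
  assumes "\<And>S v. S \<subseteq> V \<Longrightarrow> v \<in> V \<Longrightarrow> mv1 S v \<Longrightarrow> mv2 S v"
  shows "reach V mv1 \<subseteq> reach V mv2"
proof
  fix S assume "S \<in> reach V mv1"
  then show "S \<in> reach V mv2"
  proof (induction rule: reach.induct)
    case empty
    show ?case by (rule reach.empty)
  next
    case (step S v)
    then show ?case using reach_subset_finite[OF step.hyps(1)] assms by (blast intro: reach.step)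
  qed
qed

lemma reach_cong:
  assumes "\<And>S v. S \<subseteq> V \<Longrightarrow> v \<in> V \<Longrightarrow> mv1 S v = mv2 S v"
  shows "reach V mv1 = reach V mv2"
  using reach_mono_rules[of V mv1 mv2] reach_mono_rules[of V mv2 mv1] assms by blast

lemma simplicial_complex_face_subset:
  "simplicial_complex V K \<Longrightarrow> F \<in> K \<Longrightarrow> F \<subseteq> V \<and> finite F"
  unfolding simplicial_complex_def by simp

lemma simplicial_complex_subset_face:
  "simplicial_complex V K \<Longrightarrow> F \<in> K \<Longrightarrow> G \<subseteq> F \<Longrightarrow> G \<in> K"
  unfolding simplicial_complex_def by simp

lemma reach_legal_ruleset:
  assumes K: "simplicial_complex V K" and "K \<noteq> {}"
  shows "reach V (legal_ruleset K) = K"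
proof
  have "{} \<in> K" using \<open>K \<noteq> {}\<close> simplicial_complex_subset_face[OF K] by blast
  show "reach V (legal_ruleset K) \<subseteq> K"
  proof
    fix S assume "S \<in> reach V (legal_ruleset K)"
    then show "S \<in> K"
      by (induction rule: reach.induct) (simp_all add: \<open>{} \<in> K\<close> legal_ruleset_def)
  qed
  have face_reach: "F \<in> K \<Longrightarrow> F \<in> reach V (legal_ruleset K)" if "finite F" for F
    using that
  proof (induction F rule: finite_induct)
    case empty
    show ?case by (rule reach.empty)
  next
    case (insert v F)
    have "F \<in> K" using simplicial_complex_subset_face[OF K insert.prems] by blast
    moreover have "v \<in> V" using simplicial_complex_face_subset[OF K insert.prems] by simp
    moreover have "legal_ruleset K F v" using insert.prems by (simp add: legal_ruleset_def)
    ultimately show ?case using insert.IH insert.hyps(2) by (simp add: reach.step)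
  qed
  show "K \<subseteq> reach V (legal_ruleset K)"
    using face_reach simplicial_complex_face_subset[OF K] by blast
qed

lemma strong_placement_prefix_reach:
  assumes sp: "strong_placement V mv" and S: "S \<in> reach V mv"
    and vs: "distinct vs" "set vs = S" and "k \<le> length vs"
  shows "set (take k vs) \<in> reach V mv"
  using \<open>k \<le> length vs\<close>
proof (induction k)
  case 0
  show ?case by (simp add: reach.empty)
next
  case (Suc k)
  then have k: "k < length vs" by simp
  have take_Suc: "set (take (Suc k) vs) = insert (vs ! k) (set (take k vs))"
    using k by (simp add: take_Suc_conv_app_nth)
  have "vs ! k \<notin> set (take k vs)"
    using vs(1) k by (simp add: nth_eq_iff_index_eq in_set_conv_nth)
  moreover have "vs ! k \<in> V" using k vs(2) reach_subset_finite[OF S] by auto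
  moreover have "mv (set (take k vs)) (vs ! k)"
    using sp S vs k unfolding strong_placement_def by blast
  ultimately show ?case using take_Suc Suc by (auto intro: reach.step)
qed

lemma strong_placement_reach_subset:
  assumes sp: "strong_placement V mv" and S: "S \<in> reach V mv" and "T \<subseteq> S"
  shows "T \<in> reach V mv"
proof -
  have "finite S" using reach_subset_finite[OF S] by simp
  obtain xs where xs: "distinct xs" "set xs = T"
    using finite_distinct_list finite_subset[OF \<open>T \<subseteq> S\<close> \<open>finite S\<close>] by blast
  obtain ys where ys: "distinct ys" "set ys = S - T"
    using finite_distinct_list \<open>finite S\<close> by blast
  have "distinct (xs @ ys)" "set (xs @ ys) = S" using xs ys \<open>T \<subseteq> S\<close> by auto
  from strong_placement_prefix_reach[OF sp S this, of "length xs"]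
  show ?thesis using xs by simp
qed

lemma simplicial_complex_reach:
  "strong_placement V mv \<Longrightarrow> simplicial_complex V (reach V mv)"
  unfolding simplicial_complex_def
  using reach_subset_finite strong_placement_reach_subset by blast

definition min_nonfaces :: "'a set \<Rightarrow> 'a set set \<Rightarrow> 'a set set" where
  "min_nonfaces V K = {F. F \<subseteq> V \<and> F \<notin> K \<and> (\<forall>G. G \<subset> F \<longrightarrow> G \<in> K)}"

definition down_closure :: "'a set set \<Rightarrow> 'a set set" where
  "down_closure M = {G. \<exists>F\<in>M. G \<subseteq> F}"

lemma simplicial_complex_down_closure:
  assumes "finite V" and "M \<subseteq> Pow V"
  shows "simplicial_complex V (down_closure M)"
  unfolding simplicial_complex_def
proof (intro conjI ballI allI impI)
  fix F assume "F \<in> down_closure M"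
  then show "F \<subseteq> V" using assms(2) unfolding down_closure_def by blast
  then show "finite F" using assms(1) by (rule finite_subset)
next
  fix F G assume "F \<in> down_closure M" "G \<subseteq> F"
  then show "G \<in> down_closure M" unfolding down_closure_def by blast
qed

lemma facets_down_closure:
  assumes antichain: "\<And>F G. F \<in> M \<Longrightarrow> G \<in> M \<Longrightarrow> F \<subseteq> G \<Longrightarrow> F = G"
  shows "facets (down_closure M) = M"
proof (intro equalityI subsetI)
  fix F assume "F \<in> facets (down_closure M)"
  then obtain G where "G \<in> M" "F \<subseteq> G" "G \<in> down_closure M"
    unfolding facets_def down_closure_def by auto
  with \<open>F \<in> facets (down_closure M)\<close> show "F \<in> M"
    unfolding facets_def by auto
next
  fix F assume "F \<in> M"
  have "G = F" if G: "G \<in> down_closure M" and FG: "F \<subseteq> G" for G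
  proof -
    obtain H where "H \<in> M" "G \<subseteq> H" using G unfolding down_closure_def by blast
    then have "F = H" using antichain[OF \<open>F \<in> M\<close>] FG by blast
    then show "G = F" using \<open>G \<subseteq> H\<close> FG by blast
  qed
  moreover have "F \<in> down_closure M" using \<open>F \<in> M\<close> unfolding down_closure_def by auto
  ultimately show "F \<in> facets (down_closure M)" unfolding facets_def by auto
qed

lemma min_nonfaces_antichain:
  "F \<in> min_nonfaces V K \<Longrightarrow> G \<in> min_nonfaces V K \<Longrightarrow> F \<subseteq> G \<Longrightarrow> F = G"
  unfolding min_nonfaces_def by blast

lemma min_nonface_subset:
  "finite T \<Longrightarrow> T \<subseteq> V \<Longrightarrow> T \<notin> K \<Longrightarrow> \<exists>F \<in> min_nonfaces V K. F \<subseteq> T"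
proof (induction T rule: finite_psubset_induct)
  case (psubset T)
  show ?case
  proof (cases "\<forall>G. G \<subset> T \<longrightarrow> G \<in> K")
    case True
    then show ?thesis using psubset.prems unfolding min_nonfaces_def by blast
  next
    case False
    then obtain G where "G \<subset> T" "G \<notin> K" by blast
    then show ?thesis using psubset by (meson order.trans psubset_imp_subset)
  qed
qed

lemma face_iff_no_min_nonface:
  assumes K: "simplicial_complex V K" and "finite V" and "T \<subseteq> V"
  shows "T \<in> K \<longleftrightarrow> (\<forall>F \<in> min_nonfaces V K. \<not> F \<subseteq> T)"
proof
  assume "T \<in> K"
  show "\<forall>F \<in> min_nonfaces V K. \<not> F \<subseteq> T"
  proof (intro ballI notI)
    fix F assume "F \<in> min_nonfaces V K" "F \<subseteq> T"
    then have "F \<in> K" using simplicial_complex_subset_face[OF K \<open>T \<in> K\<close>] by blast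
    with \<open>F \<in> min_nonfaces V K\<close> show False unfolding min_nonfaces_def by blast
  qed
next
  assume no_min_nonface: "\<forall>F \<in> min_nonfaces V K. \<not> F \<subseteq> T"
  show "T \<in> K"
  proof (rule ccontr)
    assume "T \<notin> K"
    have "finite T" using \<open>T \<subseteq> V\<close> \<open>finite V\<close> by (rule finite_subset)
    from min_nonface_subset[OF this \<open>T \<subseteq> V\<close> \<open>T \<notin> K\<close>] no_min_nonface
    show False by blast
  qed
qed

lemma reach_illegal_ruleset_min_nonfaces:
  assumes "simplicial_complex V K" and "finite V"
  shows "reach V (illegal_ruleset (down_closure (min_nonfaces V K))) = reach V (legal_ruleset K)"
proof (rule reach_cong)
  fix S v assume "S \<subseteq> V" "v \<in> V"
  then show "illegal_ruleset (down_closure (min_nonfaces V K)) S v = legal_ruleset K S v"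
    using face_iff_no_min_nonface[OF assms, of "insert v S"]
    by (simp add: illegal_ruleset_def legal_ruleset_def
        facets_down_closure[OF min_nonfaces_antichain])
qed

lemma finite_vertices: "finite (vertices n m)"
  unfolding vertices_def by simp

theorem theorem4p4:
  fixes n m :: nat and mv :: "vtx set \<Rightarrow> vtx \<Rightarrow> bool"
  assumes "strong_placement (vertices n m) mv"
  shows "\<exists>\<Delta> \<Gamma>. simplicial_complex (vertices n m) \<Delta> \<and> simplicial_complex (vertices n m) \<Gamma>
           \<and> reach (vertices n m) (illegal_ruleset \<Gamma>) = reach (vertices n m) mv
           \<and> reach (vertices n m) (legal_ruleset \<Delta>) = reach (vertices n m) mv"
proof -
  define V where "V = vertices n m"
  define \<Delta> where "\<Delta> = reach V mv"
  define \<Gamma> where "\<Gamma> = down_closure (min_nonfaces V \<Delta>)"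
  have "finite V" unfolding V_def by (rule finite_vertices)
  have \<Delta>: "simplicial_complex V \<Delta>"
    unfolding \<Delta>_def V_def by (rule simplicial_complex_reach[OF assms])
  have legal: "reach V (legal_ruleset \<Delta>) = \<Delta>"
    using reach_legal_ruleset[OF \<Delta>] reach.empty unfolding \<Delta>_def by blast
  have "simplicial_complex V \<Gamma>"
    unfolding \<Gamma>_def using \<open>finite V\<close>
    by (rule simplicial_complex_down_closure) (auto simp: min_nonfaces_def)
  moreover have "reach V (illegal_ruleset \<Gamma>) = \<Delta>"
    unfolding \<Gamma>_def using reach_illegal_ruleset_min_nonfaces[OF \<Delta> \<open>finite V\<close>] legal by simp
  ultimately show ?thesis
    using \<Delta> legal unfolding V_def \<Delta>_def by blast
qed

end
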